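(* Let $d\ge1$ and let $1\le k\le 2d$ be an integer with $k(k-1)<2d(2d-1)/c(d)$. Then $\theta^{\rm B}(k,d)=0$.
   Context: For integers $d\ge1$ and $1\le k\le 2d$, let each vertex $x\in\mathbb{Z}^d$, independently of all others, choose a uniformly random subset of exactly $k$ of its $2d$ nearest neighbors (in $\ell_1$-distance). The bidirectional $k$-neighbor graph ($k$-BnG) on $\mathbb{Z}^d$ has an undirected edge between nearest neighbors $x,y$ if and only if $x$ chose $y$ and $y$ chose $x$. We write $\theta^{\rm B}(k,d)=\mathbb{P}(o\rightsquigarrow\infty\text{ in the $k$-BnG on }\mathbb{Z}^d)$, where $o$ is the origin and $o\rightsquigarrow\infty$ is the event that there is an infinite self-avoiding path of edges of the $k$-BnG starting at $o$. The connective constant of $\mathbb{Z}^d$ is $c(d)=\lim_{n\to\infty}c_n(d)^{1/n}$, where $c_n(d)$ is the number of self-avoiding nearest-neighbor paths of length $n$ in $\mathbb{Z}^d$ starting at the origin. *)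

theory Defs
  imports "HOL-Probability.Probability"
begin

text \<open>Sites of the lattice Z^d are functions 'd \<Rightarrow> int, where 'd is a finite
  index type with CARD('d) = d.\<close>

definition nn :: "('d::finite \<Rightarrow> int) \<Rightarrow> ('d \<Rightarrow> int) \<Rightarrow> bool" where
  "nn x y \<longleftrightarrow> (\<Sum>i\<in>UNIV. \<bar>x i - y i\<bar>) = 1"

definition nbrs :: "('d::finite \<Rightarrow> int) \<Rightarrow> ('d \<Rightarrow> int) set" where
  "nbrs x = {y. nn x y}"

definition choices :: "nat \<Rightarrow> ('d::finite \<Rightarrow> int) \<Rightarrow> ('d \<Rightarrow> int) set set" where
  "choices k x = {S. S \<subseteq> nbrs x \<and> card S = k}"

definition BnG_space :: "nat \<Rightarrow> (('d::finite \<Rightarrow> int) \<Rightarrow> ('d \<Rightarrow> int) set) measure" where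
  "BnG_space k = PiM UNIV (\<lambda>x. measure_pmf (pmf_of_set (choices k x)))"

definition BnG_edge :: "(('d::finite \<Rightarrow> int) \<Rightarrow> ('d \<Rightarrow> int) set) \<Rightarrow> ('d \<Rightarrow> int) \<Rightarrow> ('d \<Rightarrow> int) \<Rightarrow> bool" where
  "BnG_edge \<omega> x y \<longleftrightarrow> nn x y \<and> y \<in> \<omega> x \<and> x \<in> \<omega> y"

definition perc_event :: "nat \<Rightarrow> (('d::finite \<Rightarrow> int) \<Rightarrow> ('d \<Rightarrow> int) set) set" where
  "perc_event k = {\<omega> \<in> space (BnG_space k).
      \<exists>p :: nat \<Rightarrow> ('d \<Rightarrow> int). p 0 = (\<lambda>_. 0) \<and> inj p \<and> (\<forall>n. BnG_edge \<omega> (p n) (p (Suc n)))}"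

definition thetaB :: "nat \<Rightarrow> 'd::finite itself \<Rightarrow> real" where
  "thetaB k T = measure (BnG_space k :: (('d \<Rightarrow> int) \<Rightarrow> ('d \<Rightarrow> int) set) measure) (perc_event k)"

definition saw_count :: "'d::finite itself \<Rightarrow> nat \<Rightarrow> nat" where
  "saw_count T n = card {ps :: ('d \<Rightarrow> int) list. length ps = Suc n \<and> ps ! 0 = (\<lambda>_. 0) \<and> distinct ps
      \<and> (\<forall>i<n. nn (ps ! i) (ps ! Suc i))}"

definition conn_const :: "'d::finite itself \<Rightarrow> real" where
  "conn_const T = lim (\<lambda>n. root n (real (saw_count T n)))"

end

theory Submission
  imports Defs
begin

text \<open>A path from the origin to infinity contains, for every n, an open self-avoiding walk with
  n + 1 steps. Such a walk is open only if each of its n interior vertices chose both of its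
  walk neighbours, which happens with probability q = k(k-1)/(2d(2d-1)) at each vertex,
  independently since the vertices are distinct. Hence theta^B(k,d) is at most
  c_{n+1}(d) q^n \<le> c_1(d) c_n(d) q^n. By Fekete's lemma c_n(d)^{1/n} converges to c(d), and
  q c(d) < 1, so the root test sends this bound to 0. The percolation event is measurable
  because, by Koenig's lemma, it is the countable intersection of the events that some
  self-avoiding walk with n steps is open.\<close>

lemma nn_sym: "nn x y \<longleftrightarrow> nn y x"
  unfolding nn_def by (simp add: abs_minus_commute)

lemma nn_translate: "nn (x - c) (y - c) \<longleftrightarrow> nn x y"
  unfolding nn_def by simp

lemma nn_abs_diff_le_1:
  assumes "nn x y"
  shows "\<bar>x i - y i\<bar> \<le> 1"
proof -
  have "\<bar>x i - y i\<bar> \<le> (\<Sum>j\<in>UNIV. \<bar>x j - y j\<bar>)"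
    by (rule member_le_sum) auto
  with assms show ?thesis by (simp add: nn_def)
qed

lemma nn_iff_unit_step: "nn x y \<longleftrightarrow> (\<exists>i s. s \<in> {1, -1} \<and> y = x(i := x i + s))"
proof
  assume xy: "nn x y"
  have sum1: "(\<Sum>j\<in>UNIV. \<bar>x j - y j\<bar>) = 1" using xy by (simp add: nn_def)
  obtain i where "x i \<noteq> y i"
    using sum1 by force
  have split: "(\<Sum>j\<in>UNIV. \<bar>x j - y j\<bar>) = \<bar>x i - y i\<bar> + (\<Sum>j\<in>UNIV - {i}. \<bar>x j - y j\<bar>)"
    by (simp add: sum.remove)
  have "(\<Sum>j\<in>UNIV - {i}. \<bar>x j - y j\<bar>) \<ge> 0" by (rule sum_nonneg) auto
  with split sum1 \<open>x i \<noteq> y i\<close> have step: "\<bar>x i - y i\<bar> = 1"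
    and rest: "(\<Sum>j\<in>UNIV - {i}. \<bar>x j - y j\<bar>) = 0" by linarith+
  from rest have "\<And>j. j \<noteq> i \<Longrightarrow> y j = x j"
    by (subst (asm) sum_nonneg_eq_0_iff) auto
  hence "y = x(i := x i + (y i - x i))" by (auto simp: fun_eq_iff)
  moreover have "y i - x i \<in> {1, -1}" using step by (auto simp: abs_if split: if_splits)
  ultimately show "\<exists>i s. s \<in> {1, -1} \<and> y = x(i := x i + s)" by blast
next
  assume "\<exists>i s. s \<in> {1, -1} \<and> y = x(i := x i + s)"
  then obtain i s where "s \<in> {1, -1}" and y: "y = x(i := x i + s)" by blast
  hence "\<And>j. \<bar>x j - y j\<bar> = (if j = i then 1 else 0)" by auto
  thus "nn x y" by (simp add: nn_def)
qed

lemma nbrs_eq_image: "nbrs x = (\<lambda>(i, s). x(i := x i + s)) ` (UNIV \<times> {1, -1})"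
  unfolding nbrs_def nn_iff_unit_step by auto

lemma finite_nbrs: "finite (nbrs (x :: 'd::finite \<Rightarrow> int))"
  unfolding nbrs_eq_image by simp

lemma card_nbrs: "card (nbrs (x :: 'd::finite \<Rightarrow> int)) = 2 * CARD('d)"
proof -
  have "inj_on (\<lambda>(i, s). x(i := x i + s)) (UNIV \<times> {1, -1})"
    by (rule inj_onI) (auto simp: fun_eq_iff split: if_splits)
  hence "card (nbrs x) = card ((UNIV :: 'd set) \<times> {1 :: int, -1})"
    unfolding nbrs_eq_image by (rule card_image)
  thus ?thesis by (simp add: card_cartesian_product)
qed

lemma binomial_mult_pair:
  assumes "2 \<le> k"
  shows "(m choose k) * (k * (k - 1)) = ((m - 2) choose (k - 2)) * (m * (m - 1))"
proof -
  have "k * (m choose k) = m * ((m - 1) choose (k - 1))"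
    using assms by (intro times_binomial_minus1_eq) simp
  moreover have "(k - 1) * ((m - 1) choose (k - 1)) = (m - 1) * ((m - 2) choose (k - 2))"
    using times_binomial_minus1_eq[of "k - 1" "m - 1"] assms by (simp add: numeral_2_eq_2)
  ultimately show ?thesis
    by (metis mult.assoc mult.commute)
qed

lemma card_k_subsets_containing_pair:
  assumes N: "finite N" and ab: "a \<in> N" "b \<in> N" "a \<noteq> b" and k: "2 \<le> k"
  shows "card {S. S \<subseteq> N \<and> card S = k \<and> a \<in> S \<and> b \<in> S} = (card N - 2) choose (k - 2)"
proof -
  have "bij_betw (\<lambda>T. insert a (insert b T))
      {T. T \<subseteq> N - {a, b} \<and> card T = k - 2} {S. S \<subseteq> N \<and> card S = k \<and> a \<in> S \<and> b \<in> S}"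
  proof (rule bij_betw_byWitness[where f' = "\<lambda>S. S - {a, b}"])
    show "(\<lambda>T. insert a (insert b T)) ` {T. T \<subseteq> N - {a, b} \<and> card T = k - 2}
        \<subseteq> {S. S \<subseteq> N \<and> card S = k \<and> a \<in> S \<and> b \<in> S}"
      using ab k N by (auto simp: finite_subset card_insert_if)
    show "(\<lambda>S. S - {a, b}) ` {S. S \<subseteq> N \<and> card S = k \<and> a \<in> S \<and> b \<in> S}
        \<subseteq> {T. T \<subseteq> N - {a, b} \<and> card T = k - 2}"
      using ab N by (auto simp: card_Diff_subset finite_subset)
  qed auto
  hence "card {S. S \<subseteq> N \<and> card S = k \<and> a \<in> S \<and> b \<in> S}
      = card {T. T \<subseteq> N - {a, b} \<and> card T = k - 2}"
    by (simp add: bij_betw_same_card)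
  also have "\<dots> = card (N - {a, b}) choose (k - 2)"
    using N by (simp add: n_subsets)
  finally show ?thesis using ab by (simp add: card_Diff_subset numeral_2_eq_2)
qed

lemma prob_k_subset_contains_pair:
  assumes N: "finite N" and ab: "a \<in> N" "b \<in> N" "a \<noteq> b" and k: "k \<le> card N"
  shows "measure_pmf.prob (pmf_of_set {S. S \<subseteq> N \<and> card S = k}) {S. a \<in> S \<and> b \<in> S}
    = real (k * (k - 1)) / real (card N * (card N - 1))"
proof -
  let ?C = "{S. S \<subseteq> N \<and> card S = k}"
  have "finite ?C" using N by (simp add: finite_subset)
  moreover have "?C \<noteq> {}"
    using obtain_subset_with_card_n[OF k] by blast
  ultimately have prob: "measure_pmf.prob (pmf_of_set ?C) {S. a \<in> S \<and> b \<in> S}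
      = card {S. S \<subseteq> N \<and> card S = k \<and> a \<in> S \<and> b \<in> S} / (card N choose k)"
    using N by (simp add: measure_pmf_of_set n_subsets Int_def conj_assoc)
  show ?thesis
  proof (cases "2 \<le> k")
    case True
    have "card {a, b} \<le> card N" using ab N by (intro card_mono) auto
    hence "card N \<ge> 2" using ab by simp
    hence "real (card N * (card N - 1)) > 0" by simp
    moreover have "real (card N choose k) > 0" using k by simp
    ultimately show ?thesis
      unfolding prob card_k_subsets_containing_pair[OF N ab True]
      using binomial_mult_pair[OF True, of "card N"]
      by (simp add: field_simps flip: of_nat_mult)
  next
    case False
    have "card S \<ge> 2" if "S \<subseteq> N" "a \<in> S" "b \<in> S" for S
      using card_mono[of S "{a, b}"] that ab N by (auto simp: finite_subset)
    with False have no_pair: "{S. S \<subseteq> N \<and> card S = k \<and> a \<in> S \<and> b \<in> S} = {}"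
      by auto
    show ?thesis unfolding prob no_pair using False by simp
  qed
qed

definition saws :: "'d::finite itself \<Rightarrow> nat \<Rightarrow> ('d \<Rightarrow> int) list set" where
  "saws T n = {ps. length ps = Suc n \<and> ps ! 0 = (\<lambda>_. 0) \<and> distinct ps
      \<and> (\<forall>i<n. nn (ps ! i) (ps ! Suc i))}"

lemma saw_count_eq_card_saws: "saw_count T n = card (saws T n)"
  unfolding saw_count_def saws_def ..

lemma saws_coordinate_bound:
  assumes "ps \<in> saws T n" "i \<le> n"
  shows "\<bar>(ps ! i) j\<bar> \<le> int i"
  using assms(2)
proof (induction i)
  case 0
  then show ?case using assms(1) by (simp add: saws_def)
next
  case (Suc i)
  have "nn (ps ! i) (ps ! Suc i)" using assms(1) Suc.prems by (simp add: saws_def)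
  hence "\<bar>(ps ! i) j - (ps ! Suc i) j\<bar> \<le> 1" by (rule nn_abs_diff_le_1)
  with Suc show ?case by simp
qed

lemma finite_saws: "finite (saws (T :: 'd::finite itself) n)"
proof -
  define box where "box = PiE (UNIV :: 'd set) (\<lambda>_. {-int n..int n})"
  have "saws T n \<subseteq> {ps. set ps \<subseteq> box \<and> length ps = Suc n}"
  proof (safe)
    fix ps x assume ps: "ps \<in> saws T n" and "x \<in> set ps"
    then obtain i where "i < length ps" "x = ps ! i" by (auto simp: in_set_conv_nth)
    with ps have "i \<le> n" by (simp add: saws_def)
    have "\<bar>x j\<bar> \<le> int n" for j
      using saws_coordinate_bound[OF ps \<open>i \<le> n\<close>, of j] \<open>i \<le> n\<close> \<open>x = ps ! i\<close> by simp
    thus "x \<in> box" by (force simp: box_def PiE_UNIV_domain abs_le_iff)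
  qed (simp add: saws_def)
  moreover have "finite {ps. set ps \<subseteq> box \<and> length ps = Suc n}"
    by (intro finite_lists_length_eq) (simp add: box_def finite_PiE)
  ultimately show ?thesis by (rule finite_subset)
qed

lemma saws_nonempty: "saws (T :: 'd::finite itself) n \<noteq> {}"
proof -
  obtain j :: 'd where True by blast
  define line where "line = (\<lambda>t::nat. (\<lambda>i. if i = j then int t else 0))"
  have inj_line: "inj line" by (rule injI) (simp add: line_def fun_eq_iff, metis of_nat_eq_iff)
  moreover have "line 0 = (\<lambda>_. 0)" by (simp add: line_def fun_eq_iff)
  moreover have "nn (line i) (line (Suc i))" for i
  proof -
    have "\<And>l. \<bar>line i l - line (Suc i) l\<bar> = (if l = j then 1 else 0)" by (simp add: line_def)
    thus ?thesis by (simp add: nn_def)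
  qed
  ultimately have "map line [0..<Suc n] \<in> saws T n"
    by (auto simp: saws_def distinct_map inj_on_subset[OF inj_line] nth_upt simp del: upt_Suc)
  thus ?thesis by blast
qed

lemma card_saws_pos: "card (saws T n) > 0"
  using finite_saws[of T n] saws_nonempty[of T n] by (simp add: card_gt_0_iff)

text \<open>Cutting a walk of length n + m at step n and translating the second piece to the origin
  is injective.\<close>
lemma card_saws_add_le:
  fixes T :: "'d::finite itself"
  shows "card (saws T (n + m)) \<le> card (saws T n) * card (saws T m)"
proof -
  define cut where "cut = (\<lambda>ps :: ('d \<Rightarrow> int) list.
    (take (Suc n) ps, map (\<lambda>v. v - ps ! n) (drop n ps)))"
  have shift_inj: "inj (\<lambda>v :: 'd \<Rightarrow> int. v - c)" for c
    by (rule injI) (simp add: fun_eq_iff fun_diff_def)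
  have "cut ` saws T (n + m) \<subseteq> saws T n \<times> saws T m"
  proof (rule image_subsetI)
    fix ps assume ps: "ps \<in> saws T (n + m)"
    hence "take (Suc n) ps \<in> saws T n" by (auto simp: saws_def)
    moreover have "map (\<lambda>v. v - ps ! n) (drop n ps) \<in> saws T m"
      using ps by (auto simp: saws_def distinct_map inj_on_subset[OF shift_inj] nn_translate)
    ultimately show "cut ps \<in> saws T n \<times> saws T m" by (simp add: cut_def)
  qed
  moreover have "inj_on cut (saws T (n + m))"
  proof (rule inj_onI)
    fix ps qs assume ps: "ps \<in> saws T (n + m)" and qs: "qs \<in> saws T (n + m)"
      and eq: "cut ps = cut qs"
    hence take: "take (Suc n) ps = take (Suc n) qs" by (simp add: cut_def)
    moreover have "ps ! n = qs ! n"
      using ps qs arg_cong[OF take, of "\<lambda>xs. xs ! n"] by (simp add: saws_def)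
    ultimately have "drop n ps = drop n qs"
      using eq by (simp add: cut_def inj_map_eq_map[OF shift_inj])
    with take show "ps = qs"
      by (metis append_take_drop_id take_take min_absorb1 le_SucI order_refl)
  qed
  ultimately have "card (saws T (n + m)) \<le> card (saws T n \<times> saws T m)"
    by (intro card_inj_on_le) (simp_all add: finite_saws)
  thus ?thesis by (simp add: card_cartesian_product)
qed

lemma subadditive_iterate:
  fixes a :: "nat \<Rightarrow> real"
  assumes sub: "\<And>n m. a (n + m) \<le> a n + a m"
  shows "a (q * m + r) \<le> real q * a m + a r"
proof (induction q)
  case (Suc q)
  have "a (Suc q * m + r) \<le> a m + a (q * m + r)"
    using sub[of m "q * m + r"] by (simp add: add.assoc)
  with Suc show ?case by (simp add: algebra_simps)
qed simp

lemma subadditive_div_le: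
  fixes a :: "nat \<Rightarrow> real"
  assumes nonneg: "\<And>n. a n \<ge> 0" and sub: "\<And>n m. a (n + m) \<le> a n + a m"
    and "m > 0" "n > 0"
  shows "a n / n \<le> a m / m + (\<Sum>r<m. a r) / n"
proof -
  define q r where "q = n div m" and "r = n mod m"
  have "r < m" using \<open>m > 0\<close> by (simp add: r_def)
  have "a n \<le> real q * a m + a r"
    using subadditive_iterate[OF sub, of q m r] by (simp add: q_def r_def)
  also have "real q * a m = (real q * real m) * (a m / m)" using \<open>m > 0\<close> by simp
  also have "\<dots> \<le> real n * (a m / m)"
    by (intro mult_right_mono) (simp_all add: nonneg q_def flip: of_nat_mult)
  also have "a r \<le> (\<Sum>r<m. a r)"
    using \<open>r < m\<close> by (intro member_le_sum) (simp_all add: nonneg)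
  finally show ?thesis using \<open>n > 0\<close> by (simp add: field_simps)
qed

lemma Fekete_subadditive:
  fixes a :: "nat \<Rightarrow> real"
  assumes nonneg: "\<And>n. a n \<ge> 0" and sub: "\<And>n m. a (n + m) \<le> a n + a m"
  shows "(\<lambda>n. a n / n) \<longlonglongrightarrow> (INF n\<in>{1..}. a n / n)"
proof -
  have bdd: "bdd_below ((\<lambda>n. a n / n) ` {1..})"
    by (rule bdd_belowI[of _ 0]) (auto simp: nonneg)
  show ?thesis
  proof (rule order_tendstoI)
    fix y assume "y < (INF n\<in>{1..}. a n / n)"
    hence "y < a n / n" if "n \<ge> 1" for n
      using cINF_lower[OF bdd, of n] that by simp
    thus "eventually (\<lambda>n. y < a n / n) sequentially"
      unfolding eventually_sequentially by blast
  next
    fix y assume "(INF n\<in>{1..}. a n / n) < y"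
    then obtain m where "m \<ge> 1" "a m / m < y"
      using cINF_less_iff[OF _ bdd] by auto
    hence "eventually (\<lambda>n. a m / m + (\<Sum>r<m. a r) / n < y) sequentially"
      by (intro order_tendstoD(2)[of _ "a m / m"]) (auto intro!: tendsto_eq_intros)
    moreover have "eventually (\<lambda>n. a n / n \<le> a m / m + (\<Sum>r<m. a r) / n) sequentially"
      using subadditive_div_le[OF nonneg sub, of m] \<open>m \<ge> 1\<close>
      by (intro eventually_sequentiallyI[of 1]) simp
    ultimately show "eventually (\<lambda>n. a n / n < y) sequentially"
      by eventually_elim simp
  qed
qed

lemma root_saw_count_tendsto: "(\<lambda>n. root n (saw_count T n)) \<longlonglongrightarrow> conn_const T"
proof -
  define a where "a = (\<lambda>n. ln (card (saws T n)))"
  have pos: "real (card (saws T n)) > 0" for n using card_saws_pos by simp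
  have "a n \<ge> 0" for n using card_saws_pos[of T n] by (simp add: a_def)
  moreover have "a (n + m) \<le> a n + a m" for n m
  proof -
    have "a (n + m) \<le> ln (real (card (saws T n)) * real (card (saws T m)))"
      unfolding a_def using pos card_saws_add_le[of T n m]
      by (subst ln_le_cancel_iff) (simp_all flip: of_nat_mult)
    also have "\<dots> = a n + a m" using pos by (simp add: a_def ln_mult)
    finally show ?thesis .
  qed
  ultimately have "(\<lambda>n. exp (a n / n)) \<longlonglongrightarrow> exp (INF n\<in>{1..}. a n / n)"
    by (intro tendsto_exp Fekete_subadditive)
  moreover have "eventually (\<lambda>n. exp (a n / n) = root n (saw_count T n)) sequentially"
  proof (rule eventually_sequentiallyI[of 1])
    fix n :: nat assume "n \<ge> 1"
    thus "exp (a n / n) = root n (saw_count T n)"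
      using pos[of n] by (simp add: a_def saw_count_eq_card_saws root_powr_inverse powr_def)
  qed
  ultimately have "(\<lambda>n. root n (saw_count T n)) \<longlonglongrightarrow> exp (INF n\<in>{1..}. a n / n)"
    by (rule Lim_transform_eventually)
  hence "convergent (\<lambda>n. root n (saw_count T n))" by (rule convergentI)
  thus ?thesis by (simp add: conn_const_def convergent_LIMSEQ_iff)
qed

lemma conn_const_ge_1: "conn_const T \<ge> 1"
proof (rule LIMSEQ_le_const[OF root_saw_count_tendsto], intro exI allI impI)
  fix n :: nat assume "n \<ge> 1"
  thus "1 \<le> root n (saw_count T n)"
    using card_saws_pos[of T n] by (simp add: saw_count_eq_card_saws)
qed

lemma infinite_extension_step:
  fixes T :: "'a list set"
  assumes prefix_closed: "\<And>xs ys. xs @ ys \<in> T \<Longrightarrow> xs \<in> T"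
    and finitely_branching: "finite {a. xs @ [a] \<in> T}"
    and infinite: "infinite {ys. xs @ ys \<in> T}"
  shows "\<exists>a. infinite {ys. (xs @ [a]) @ ys \<in> T}"
proof (rule ccontr)
  assume "\<nexists>a. infinite {ys. (xs @ [a]) @ ys \<in> T}"
  hence "finite (insert [] (\<Union>a\<in>{a. xs @ [a] \<in> T}. (#) a ` {ys. (xs @ [a]) @ ys \<in> T}))"
    using finitely_branching by simp
  moreover have "{ys. xs @ ys \<in> T}
      \<subseteq> insert [] (\<Union>a\<in>{a. xs @ [a] \<in> T}. (#) a ` {ys. (xs @ [a]) @ ys \<in> T})"
  proof
    fix ys assume ys: "ys \<in> {ys. xs @ ys \<in> T}"
    show "ys \<in> insert [] (\<Union>a\<in>{a. xs @ [a] \<in> T}. (#) a ` {ys. (xs @ [a]) @ ys \<in> T})"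
    proof (cases ys)
      case (Cons a zs)
      with ys have "(xs @ [a]) @ zs \<in> T" by simp
      with Cons show ?thesis using prefix_closed by blast
    qed simp
  qed
  ultimately show False using infinite finite_subset by blast
qed

lemma koenig_lemma:
  fixes T :: "'a list set"
  assumes prefix_closed: "\<And>xs ys. xs @ ys \<in> T \<Longrightarrow> xs \<in> T"
    and finitely_branching: "\<And>xs. finite {a. xs @ [a] \<in> T}"
    and unbounded: "\<And>n. \<exists>xs\<in>T. length xs = n"
  shows "\<exists>f. \<forall>n. map f [0..<n] \<in> T"
proof -
  define good where "good xs \<longleftrightarrow> infinite {ys. xs @ ys \<in> T}" for xs
  have "\<exists>a. good (xs @ [a])" if "good xs" for xs
    unfolding good_def
  proof (rule infinite_extension_step)
    show "xs \<in> T" if "xs @ ys \<in> T" for xs ys using that by (rule prefix_closed)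
  qed (use finitely_branching \<open>good xs\<close> good_def in auto)
  then obtain ext where ext: "\<And>xs. good xs \<Longrightarrow> good (xs @ [ext xs])"
    using choice[of "\<lambda>xs a. good xs \<longrightarrow> good (xs @ [a])"] by blast
  have "infinite T"
  proof
    assume "finite T"
    then obtain N where "\<forall>xs\<in>T. length xs \<le> N"
      using finite_nat_set_iff_bounded_le[of "length ` T"] by auto
    with unbounded[of "Suc N"] show False by fastforce
  qed
  define g where "g n = ((\<lambda>xs. xs @ [ext xs]) ^^ n) []" for n
  define f where "f n = ext (g n)" for n
  have "good (g n)" for n
  proof (induction n)
    case 0
    show ?case using \<open>infinite T\<close> by (simp add: g_def good_def)
  next
    case (Suc n)
    thus ?case using ext by (simp add: g_def)
  qed
  moreover have "map f [0..<n] = g n" for n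
    by (induction n) (simp_all add: f_def g_def)
  moreover have "xs \<in> T" if "good xs" for xs
  proof -
    obtain ys where "xs @ ys \<in> T"
      using \<open>good xs\<close> not_finite_existsD unfolding good_def by blast
    thus ?thesis by (rule prefix_closed)
  qed
  ultimately have "map f [0..<n] \<in> T" for n by simp
  thus ?thesis by blast
qed

type_synonym 'd config = "('d \<Rightarrow> int) \<Rightarrow> ('d \<Rightarrow> int) set"

definition pair_choice_prob :: "nat \<Rightarrow> 'd::finite itself \<Rightarrow> real" where
  "pair_choice_prob k T = real (k * (k - 1)) / real (2 * CARD('d) * (2 * CARD('d) - 1))"

lemma pair_choice_prob_nonneg: "pair_choice_prob k T \<ge> 0"
  unfolding pair_choice_prob_def by (intro divide_nonneg_nonneg of_nat_0_le_iff)

lemma space_BnG_space: "space (BnG_space k) = UNIV"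
  unfolding BnG_space_def by (simp add: space_PiM PiE_UNIV_domain)

lemma prob_space_BnG_space: "prob_space (BnG_space k)"
  unfolding BnG_space_def by (intro prob_space_PiM prob_space_measure_pmf)

lemma sets_BnG_space_Collect: "Measurable.pred (BnG_space k) P \<Longrightarrow> {\<omega>. P \<omega>} \<in> sets (BnG_space k)"
  by (simp add: pred_def space_BnG_space)

lemma pred_BnG_choice [measurable]: "Measurable.pred (BnG_space k) (\<lambda>\<omega>. P (\<omega> x))"
  unfolding BnG_space_def
  by (rule pred_sets1[OF _ measurable_component_singleton]) simp_all

lemma pred_BnG_edge [measurable]: "Measurable.pred (BnG_space k) (\<lambda>\<omega>. BnG_edge \<omega> x y)"
  unfolding BnG_edge_def by measurable

lemma measure_BnG_space_cylinder:
  assumes "finite J"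
  shows "measure (BnG_space k) {\<omega>. \<forall>v\<in>J. \<omega> v \<in> X v}
    = (\<Prod>v\<in>J. measure_pmf.prob (pmf_of_set (choices k v)) (X v))"
proof -
  interpret product_prob_space "\<lambda>v. measure_pmf (pmf_of_set (choices k v))" UNIV
    by (intro product_prob_spaceI prob_space_measure_pmf)
  have "emeasure (BnG_space k) {\<omega>. \<forall>v\<in>J. \<omega> v \<in> X v}
      = (\<Prod>v\<in>J. ennreal (measure_pmf.prob (pmf_of_set (choices k v)) (X v)))"
    using emeasure_PiM_Collect[of J X] assms
    by (simp add: BnG_space_def space_PiM PiE_UNIV_domain measure_pmf.emeasure_eq_measure)
  thus ?thesis
    by (simp add: measure_def prod_ennreal prod_nonneg)
qed

lemma prob_choices_pair:
  fixes v :: "'d::finite \<Rightarrow> int"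
  assumes "a \<in> nbrs v" "b \<in> nbrs v" "a \<noteq> b" "k \<le> 2 * CARD('d)"
  shows "measure_pmf.prob (pmf_of_set (choices k v)) {S. a \<in> S \<and> b \<in> S}
    = pair_choice_prob k TYPE('d)"
  using prob_k_subset_contains_pair[OF finite_nbrs assms(1-3)] assms(4)
  by (simp add: choices_def card_nbrs pair_choice_prob_def)

definition BnG_path :: "'d::finite config \<Rightarrow> ('d \<Rightarrow> int) list \<Rightarrow> bool"
  where "BnG_path \<omega> ps \<longleftrightarrow> (\<forall>i. Suc i < length ps \<longrightarrow> BnG_edge \<omega> (ps ! i) (ps ! Suc i))"

lemma pred_BnG_path [measurable]: "Measurable.pred (BnG_space k) (\<lambda>\<omega>. BnG_path \<omega> ps)"
  unfolding BnG_path_def by measurable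

text \<open>Each of the n interior vertices of the walk must choose both of its walk neighbours,
  and these choices are independent because the vertices are distinct.\<close>
lemma measure_BnG_path_le:
  fixes ps :: "('d::finite \<Rightarrow> int) list"
  assumes ps: "ps \<in> saws TYPE('d) (Suc n)" and k: "k \<le> 2 * CARD('d)"
  shows "measure (BnG_space k) {\<omega>. BnG_path \<omega> ps} \<le> pair_choice_prob k TYPE('d) ^ n"
proof -
  let ?q = "pair_choice_prob k TYPE('d)"
  let ?P = "\<lambda>v. measure_pmf.prob (pmf_of_set (choices k v))"
  define J where "J = (\<lambda>i. ps ! Suc i) ` {..<n}"
  \<comment> \<open>quantifying over all indices of v avoids inverting the injection i \<mapsto> ps ! Suc i\<close>
  define X where "X v = {S. \<forall>i<n. ps ! Suc i = v \<longrightarrow> ps ! i \<in> S \<and> ps ! Suc (Suc i) \<in> S}" for v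
  have len: "length ps = Suc (Suc n)" and "distinct ps"
    and steps: "\<And>i. i < Suc n \<Longrightarrow> nn (ps ! i) (ps ! Suc i)" using ps by (auto simp: saws_def)
  interpret prob_space "BnG_space k" by (rule prob_space_BnG_space)
  have path_cylinder: "{\<omega>. BnG_path \<omega> ps} \<subseteq> {\<omega>. \<forall>v\<in>J. \<omega> v \<in> X v}"
  proof safe
    fix \<omega> v assume "BnG_path \<omega> ps" "v \<in> J"
    hence "ps ! i \<in> \<omega> (ps ! Suc i) \<and> ps ! Suc (Suc i) \<in> \<omega> (ps ! Suc i)" if "i < n" for i
      using that by (auto simp: BnG_path_def BnG_edge_def len)
    thus "\<omega> v \<in> X v" by (auto simp: X_def)
  qed
  have "finite J" by (simp add: J_def)
  hence "{\<omega>. \<forall>v\<in>J. \<omega> v \<in> X v} \<in> sets (BnG_space k)"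
    by (intro sets_BnG_space_Collect) measurable
  with path_cylinder have "measure (BnG_space k) {\<omega>. BnG_path \<omega> ps}
      \<le> measure (BnG_space k) {\<omega>. \<forall>v\<in>J. \<omega> v \<in> X v}"
    by (rule finite_measure_mono)
  also have "\<dots> = (\<Prod>v\<in>J. ?P v (X v))"
    using \<open>finite J\<close> by (rule measure_BnG_space_cylinder)
  also have "\<dots> = (\<Prod>i<n. ?P (ps ! Suc i) (X (ps ! Suc i)))"
    unfolding J_def using \<open>distinct ps\<close> len
    by (subst prod.reindex) (auto simp: inj_on_def nth_eq_iff_index_eq)
  also have "\<dots> \<le> (\<Prod>i<n. ?q)"
  proof (rule prod_mono, safe)
    fix i assume "i < n"
    have "?P (ps ! Suc i) (X (ps ! Suc i)) \<le> ?P (ps ! Suc i) {S. ps ! i \<in> S \<and> ps ! Suc (Suc i) \<in> S}"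
      using \<open>i < n\<close> by (intro measure_pmf.finite_measure_mono) (auto simp: X_def)
    also have "\<dots> = ?q"
      using steps[of i] steps[of "Suc i"] \<open>i < n\<close> \<open>distinct ps\<close> len k
      by (intro prob_choices_pair) (auto simp: nbrs_def nn_sym nth_eq_iff_index_eq)
    finally show "?P (ps ! Suc i) (X (ps ! Suc i)) \<le> ?q" .
  qed simp
  finally show ?thesis by simp
qed

definition saw_event :: "nat \<Rightarrow> nat \<Rightarrow> 'd::finite config set" where
  "saw_event k n = {\<omega>. \<exists>ps\<in>saws TYPE('d) n. BnG_path \<omega> ps}"

lemma saw_event_sets: "saw_event k n \<in> sets (BnG_space k :: 'd::finite config measure)"
proof -
  have "{\<omega>\<in>space (BnG_space k). \<exists>ps\<in>saws TYPE('d) n. BnG_path \<omega> ps} \<in> sets (BnG_space k)"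
    using finite_saws by measurable
  thus ?thesis by (simp add: saw_event_def space_BnG_space)
qed

lemma measure_saw_event_le:
  assumes "k \<le> 2 * CARD('d::finite)"
  shows "measure (BnG_space k) (saw_event k (Suc n) :: 'd config set)
    \<le> saw_count TYPE('d) (Suc n) * pair_choice_prob k TYPE('d) ^ n"
proof -
  have saw_event_eq: "saw_event k (Suc n) = (\<Union>ps\<in>saws TYPE('d) (Suc n). {\<omega>. BnG_path \<omega> ps})"
    by (auto simp: saw_event_def)
  have "measure (BnG_space k) (saw_event k (Suc n) :: 'd config set)
      \<le> (\<Sum>ps\<in>saws TYPE('d) (Suc n). measure (BnG_space k) {\<omega>. BnG_path \<omega> ps})"
    unfolding saw_event_eq
    by (rule measure_UNION_le) (simp_all add: finite_saws sets_BnG_space_Collect pred_BnG_path)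
  also have "\<dots> \<le> (\<Sum>ps\<in>saws TYPE('d) (Suc n). pair_choice_prob k TYPE('d) ^ n)"
    using assms by (intro sum_mono measure_BnG_path_le)
  finally show ?thesis by (simp add: saw_count_eq_card_saws)
qed

lemma BnG_path_map_saws:
  assumes "p 0 = (\<lambda>_. 0)" "inj p" "\<And>i. BnG_edge \<omega> (p i) (p (Suc i))"
  shows "map p [0..<Suc n] \<in> saws TYPE('d::finite) n" "BnG_path \<omega> (map p [0..<Suc n])"
  using assms
  by (auto simp: saws_def BnG_path_def BnG_edge_def distinct_map inj_on_subset[OF assms(2)] nth_upt
      simp del: upt_Suc)

lemma BnG_path_appendD:
  assumes "BnG_path \<omega> (xs @ ys)"
  shows "BnG_path \<omega> xs"
  unfolding BnG_path_def
proof (intro allI impI)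
  fix i assume "Suc i < length xs"
  thus "BnG_edge \<omega> (xs ! i) (xs ! Suc i)"
    using assms[unfolded BnG_path_def, rule_format, of i] by (simp add: nth_append)
qed

lemma infinite_BnG_path_if_long_paths:
  fixes \<omega> :: "'d::finite config"
  assumes long_paths: "\<And>n. \<omega> \<in> saw_event k n"
  shows "\<exists>p. p 0 = (\<lambda>_. 0) \<and> inj p \<and> (\<forall>i. BnG_edge \<omega> (p i) (p (Suc i)))"
proof -
  define T where "T = {ps. (ps \<noteq> [] \<longrightarrow> ps ! 0 = (\<lambda>_. 0)) \<and> distinct ps \<and> BnG_path \<omega> ps}"
  have "\<exists>p. \<forall>n. map p [0..<n] \<in> T"
  proof (rule koenig_lemma)
    show "xs \<in> T" if "xs @ ys \<in> T" for xs ys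
      using that by (auto simp: T_def nth_append dest: BnG_path_appendD)
    show "finite {a. xs @ [a] \<in> T}" for xs
    proof -
      have "{a. xs @ [a] \<in> T} \<subseteq> (if xs = [] then {\<lambda>_. 0} else nbrs (last xs))"
        by (auto simp: T_def BnG_path_def BnG_edge_def nbrs_def nth_append last_conv_nth
            dest!: spec[of _ "length xs - 1"])
      thus ?thesis by (rule finite_subset) (simp add: finite_nbrs)
    qed
    show "\<exists>xs\<in>T. length xs = n" for n
    proof (cases n)
      case 0
      thus ?thesis by (auto simp: T_def BnG_path_def)
    next
      case (Suc m)
      then obtain ps where "ps \<in> saws TYPE('d) m" "BnG_path \<omega> ps"
        using long_paths[of m] by (auto simp: saw_event_def)
      with Suc show ?thesis by (auto simp: T_def saws_def)
    qed
  qed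
  then obtain p where p: "\<And>n. map p [0..<n] \<in> T" by blast
  have "p 0 = (\<lambda>_. 0)" using p[of 1] by (simp add: T_def)
  moreover have "inj p"
  proof (rule injI)
    fix i j assume "p i = p j"
    moreover have "distinct (map p [0..<Suc (i + j)])"
      using p[of "Suc (i + j)"] by (simp add: T_def del: upt_Suc)
    ultimately show "i = j" by (simp add: distinct_map inj_on_def del: upt_Suc)
  qed
  moreover have "BnG_edge \<omega> (p i) (p (Suc i))" for i
    using p[of "Suc (Suc i)"] by (simp add: T_def BnG_path_def nth_upt del: upt_Suc)
  ultimately show ?thesis by blast
qed

lemma perc_event_eq_Inter_saw_event: "perc_event k = (\<Inter>n. saw_event k n)"
proof (intro equalityI subsetI)
  fix \<omega> assume "\<omega> \<in> perc_event k"
  then obtain p where "p 0 = (\<lambda>_. 0)" "inj p" "\<And>i. BnG_edge \<omega> (p i) (p (Suc i))"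
    by (auto simp: perc_event_def)
  from BnG_path_map_saws[OF this] show "\<omega> \<in> (\<Inter>n. saw_event k n)"
    by (auto simp: saw_event_def)
next
  fix \<omega> :: "'d::finite config" assume "\<omega> \<in> (\<Inter>n. saw_event k n)"
  hence "\<exists>p. p 0 = (\<lambda>_. 0) \<and> inj p \<and> (\<forall>i. BnG_edge \<omega> (p i) (p (Suc i)))"
    by (intro infinite_BnG_path_if_long_paths) blast
  thus "\<omega> \<in> perc_event k" by (simp add: perc_event_def space_BnG_space)
qed

lemma perc_event_sets: "perc_event k \<in> sets (BnG_space k)"
  unfolding perc_event_eq_Inter_saw_event by (rule sets.countable_INT) (auto simp: saw_event_sets)

lemma thetaB_le_saw_count:
  assumes "k \<le> 2 * CARD('d::finite)"
  shows "thetaB k TYPE('d)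
    \<le> saw_count TYPE('d) 1 * (saw_count TYPE('d) n * pair_choice_prob k TYPE('d) ^ n)"
proof -
  let ?q = "pair_choice_prob k TYPE('d)"
  interpret prob_space "BnG_space k :: 'd config measure" by (rule prob_space_BnG_space)
  have "thetaB k TYPE('d) \<le> measure (BnG_space k) (saw_event k (Suc n) :: 'd config set)"
    unfolding thetaB_def perc_event_eq_Inter_saw_event
    by (rule finite_measure_mono[OF _ saw_event_sets]) auto
  also have "\<dots> \<le> saw_count TYPE('d) (Suc n) * ?q ^ n"
    by (rule measure_saw_event_le[OF assms])
  also have "\<dots> \<le> (saw_count TYPE('d) 1 * saw_count TYPE('d) n) * ?q ^ n"
    using card_saws_add_le[of "TYPE('d)" 1 n]
    by (intro mult_right_mono)
      (simp_all add: saw_count_eq_card_saws pair_choice_prob_nonneg flip: of_nat_mult)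
  finally show ?thesis by (simp add: mult.assoc)
qed

lemma saw_count_geometric_tendsto_0:
  fixes q :: real
  assumes "q \<ge> 0" "q * conn_const T < 1"
  shows "(\<lambda>n. saw_count T n * q ^ n) \<longlonglongrightarrow> 0"
proof -
  have "(\<lambda>n. root n (saw_count T n) * q) \<longlonglongrightarrow> conn_const T * q"
    by (intro tendsto_mult root_saw_count_tendsto tendsto_const)
  moreover have "eventually (\<lambda>n. root n (saw_count T n) * q
      = root n (norm (saw_count T n * q ^ n))) sequentially"
    using \<open>q \<ge> 0\<close> by (intro eventually_sequentiallyI[of 1])
      (simp add: real_root_mult real_root_power_cancel abs_mult)
  ultimately have "(\<lambda>n. root n (norm (saw_count T n * q ^ n))) \<longlonglongrightarrow> conn_const T * q"
    by (rule Lim_transform_eventually)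
  with assms show ?thesis
    by (intro summable_LIMSEQ_zero root_test_convergence) (simp_all add: mult.commute)
qed

theorem lemma2p11:
  fixes k :: nat
  assumes "1 \<le> k" and "k \<le> 2 * CARD('d::finite)"
    and "real (k * (k - 1)) < real (2 * CARD('d) * (2 * CARD('d) - 1)) / conn_const TYPE('d)"
  shows "perc_event k \<in> sets (BnG_space k :: (('d \<Rightarrow> int) \<Rightarrow> ('d \<Rightarrow> int) set) measure)
    \<and> thetaB k TYPE('d) = 0"
proof -
  let ?q = "pair_choice_prob k TYPE('d)"
  have "CARD('d) > 0" by simp
  hence "2 * CARD('d) * (2 * CARD('d) - 1) > 0" by (intro mult_pos_pos) linarith+
  hence "?q * conn_const TYPE('d) < 1"
    using assms(3) conn_const_ge_1[of "TYPE('d)"] by (simp add: pair_choice_prob_def field_simps)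
  hence "(\<lambda>n. saw_count TYPE('d) n * ?q ^ n) \<longlonglongrightarrow> 0"
    by (intro saw_count_geometric_tendsto_0 pair_choice_prob_nonneg)
  hence "(\<lambda>n. saw_count TYPE('d) 1 * (saw_count TYPE('d) n * ?q ^ n)) \<longlonglongrightarrow> 0"
    by (rule tendsto_mult_right_zero)
  hence "thetaB k TYPE('d) \<le> 0"
    by (rule LIMSEQ_le_const) (use thetaB_le_saw_count[OF assms(2)] in blast)
  moreover have "thetaB k TYPE('d) \<ge> 0" by (simp add: thetaB_def)
  ultimately show ?thesis using perc_event_sets by simp
qed

end
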